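(* Let $\mathcal{M}$ be a uniform oriented matroid of rank $r=m-n$ on the ground set $[m]=\{1,\ldots,m\}$, with set of cocircuits $\mathcal{C}^\ast$ (uniform meaning every cocircuit has support of cardinality $m-r+1=n+1$). Identify each cocircuit $\tau$ with an $n$-dimensional face of the boundary $\partial\lozenge^m$ of the crosspolytope $\lozenge^m=\mathrm{conv}\{\pm e_1,\ldots,\pm e_m\}$, and for each $\tau\in\mathcal{C}^\ast$ let $\hat\tau$ be the $\mathbb{Z}_2$-valued simplicial cochain on $\partial\lozenge^m$ with $\hat\tau(\tau)=1$ and $\hat\tau(\theta)=0$ for every face $\theta\neq\tau$. Then the $n$-dimensional $\mathbb{Z}_2$-equivariant cochain $$ C_{\mathcal{M}}:=\sum_{\tau\in\mathcal{C}^\ast}\hat\tau\in C^n_{\mathbb{Z}_2}(\partial\lozenge^m;\mathbb{Z}_2) $$ is a cocycle representing the class $w_1^n\in H^n_{\mathbb{Z}_2}(\partial\lozenge^m;\mathbb{Z}_2)\cong H^n(\mathbb{R}P^{m-1};\mathbb{Z}_2)$, where $w_1$ is the first Stiefel–Whitney class of the free $\mathbb{Z}_2$-space $\partial\lozenge^m\cong S^{m-1}$ (antipodal action).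
   Context: A cocircuit $X\in\{0,+,-\}^m$ is identified with the face $\mathrm{conv}\{\,\mathrm{sign}(X_i)e_i : X_i\neq0\,\}$ of $\lozenge^m$, where $+e_i$ and $-e_i$ correspond to signs $+$ and $-$. The simplicial complex $\partial\lozenge^m$ carries the free involution $x\mapsto -x$; $\mathbb{Z}_2$-equivariant (invariant) cochains are identified with cochains on the quotient $\partial\lozenge^m/\mathbb{Z}_2\cong\mathbb{R}P^{m-1}$, and $w_1$ is the first Stiefel–Whitney class of the double cover $S^{m-1}\to\mathbb{R}P^{m-1}$ (the generator of $H^1(\mathbb{R}P^{m-1};\mathbb{Z}_2)$). *)

theory Defs
  imports Main "HOL-Library.Z2"
begin

(* Sign vectors on the ground set [m] = {1..m}: functions nat => int with values in
   {-1,0,1} (0 <-> sign 0, 1 <-> +, -1 <-> -), vanishing outside {1..m}. *)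
definition signvec :: "nat \<Rightarrow> (nat \<Rightarrow> int) set" where
  "signvec m = {X. (\<forall>i. X i \<in> {-1, 0, 1}) \<and> (\<forall>i. i \<notin> {1..m} \<longrightarrow> X i = 0)}"

definition supp :: "(nat \<Rightarrow> int) \<Rightarrow> nat set" where
  "supp X = {i. X i \<noteq> 0}"

definition negv :: "(nat \<Rightarrow> int) \<Rightarrow> (nat \<Rightarrow> int)" where
  "negv X = (\<lambda>i. - X i)"

definition posp :: "(nat \<Rightarrow> int) \<Rightarrow> nat set" where
  "posp X = {i. X i = 1}"

definition negp :: "(nat \<Rightarrow> int) \<Rightarrow> nat set" where
  "negp X = {i. X i = -1}"

(* The cocircuits of an
   oriented matroid are the circuits of its dual, so they are characterised by the
   (signed) circuit axioms (C0)-(C3) of Bjoerner et al. *)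
definition oriented_matroid_cocircuits :: "nat \<Rightarrow> (nat \<Rightarrow> int) set \<Rightarrow> bool" where
  "oriented_matroid_cocircuits m C \<longleftrightarrow>
     C \<subseteq> signvec m \<and>
     (\<lambda>i. 0) \<notin> C \<and>
     (\<forall>X\<in>C. negv X \<in> C) \<and>
     (\<forall>X\<in>C. \<forall>Y\<in>C. supp X \<subseteq> supp Y \<longrightarrow> X = Y \<or> X = negv Y) \<and>
     (\<forall>X\<in>C. \<forall>Y\<in>C. \<forall>e. X \<noteq> negv Y \<and> e \<in> posp X \<inter> negp Y \<longrightarrow>
        (\<exists>Z\<in>C. posp Z \<subseteq> posp X \<union> posp Y \<and> negp Z \<subseteq> negp X \<union> negp Y \<and> e \<notin> supp Z))"

(* Uniform of rank r: underlying matroid is U_{r,m}, whose cocircuits are exactly the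
   (m-r+1)-subsets of [m]. *)
definition uniform_rank :: "nat \<Rightarrow> nat \<Rightarrow> (nat \<Rightarrow> int) set \<Rightarrow> bool" where
  "uniform_rank m r C \<longleftrightarrow>
     supp ` C = {A. A \<subseteq> {1..m} \<and> card A = m - r + 1}"

(* Faces of the boundary of the crosspolytope: nonzero sign vector X <-> face
   conv{sign(X_i) e_i : X_i \<noteq> 0}, of dimension |supp X| - 1. *)
definition faces :: "nat \<Rightarrow> nat \<Rightarrow> (nat \<Rightarrow> int) set" where
  "faces m k = {X \<in> signvec m. card (supp X) = Suc k}"

definition restr :: "(nat \<Rightarrow> int) \<Rightarrow> nat set \<Rightarrow> (nat \<Rightarrow> int)" where
  "restr X A = (\<lambda>i. if i \<in> A then X i else 0)"

definition facets :: "(nat \<Rightarrow> int) \<Rightarrow> (nat \<Rightarrow> int) set" where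
  "facets X = {restr X (supp X - {i}) | i. i \<in> supp X}"

(* Z_2-valued cochains: functions from faces to Z_2 (only values on faces of the
   relevant dimension matter). *)
type_synonym cochain = "(nat \<Rightarrow> int) \<Rightarrow> bit"

definition coboundary :: "cochain \<Rightarrow> cochain" where
  "coboundary c X = (\<Sum>T\<in>facets X. c T)"

(* Z_2-equivariant (invariant) cochains = cochains on the quotient RP^{m-1} *)
definition equivariant :: "cochain \<Rightarrow> bool" where
  "equivariant c \<longleftrightarrow> (\<forall>X. c (negv X) = c X)"

definition is_cocycle :: "nat \<Rightarrow> nat \<Rightarrow> cochain \<Rightarrow> bool" where
  "is_cocycle m k c \<longleftrightarrow> (\<forall>X\<in>faces m (Suc k). coboundary c X = 0)"

(* a and b (k-cochains) represent the same class in H^k_{Z_2}(boundary crosspolytope; Z_2):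
   their difference is the coboundary of an equivariant (k-1)-cochain (nothing for k=0). *)
definition equiv_cohomologous :: "nat \<Rightarrow> nat \<Rightarrow> cochain \<Rightarrow> cochain \<Rightarrow> bool" where
  "equiv_cohomologous m k a b \<longleftrightarrow>
     (\<exists>c. equivariant c \<and>
        (\<forall>X\<in>faces m k. a X - b X = (if k = 0 then 0 else coboundary c X)))"

(* Cup product of equivariant cochains, computed on the quotient Delta-complex
   RP^{m-1} = boundary/Z_2 with its vertices (the orbits {+e_i,-e_i}) ordered by i:
   (a \<union> b)(X) = a(front p-face) * b(back face). *)
definition cup :: "nat \<Rightarrow> cochain \<Rightarrow> cochain \<Rightarrow> cochain" where
  "cup p a b X =
     (let l = sorted_list_of_set (supp X) in
        a (restr X (set (take (Suc p) l))) * b (restr X (set (drop p l))))"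

(* Representative of w_1 of the double cover S^{m-1} -> RP^{m-1}: with the section
   i |-> +e_i of the vertex orbits, an edge is sent to 1 iff its lift starting at +e_i
   ends at -e_j, i.e. iff its two vertices carry opposite signs. *)
definition w1 :: cochain where
  "w1 X = (if card (supp X) = 2 \<and> (\<exists>i j. X i = 1 \<and> X j = -1) then 1 else 0)"

fun w1_pow :: "nat \<Rightarrow> cochain" where
  "w1_pow 0 = (\<lambda>X. 1)"
| "w1_pow (Suc k) = cup k (w1_pow k) w1"

definition hat :: "(nat \<Rightarrow> int) \<Rightarrow> cochain" where
  "hat T = (\<lambda>X. if X = T then 1 else 0)"

definition C_M :: "(nat \<Rightarrow> int) set \<Rightarrow> cochain" where
  "C_M C = (\<lambda>X. \<Sum>T\<in>C. hat T X)"

end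

theory Submission
  imports Defs "HOL-Library.FuncSet"
begin

declare add_bit_eq_xor [simp del] mult_bit_eq_and [simp del]

definition sign_vectors :: "nat set \<Rightarrow> (nat \<Rightarrow> int) set" where
  "sign_vectors V = {X. (\<forall>i. X i \<in> {-1, 0, 1}) \<and> supp X \<subseteq> V}"

lemma signvec_eq_sign_vectors: "signvec m = sign_vectors {1..m}"
  unfolding signvec_def sign_vectors_def supp_def by auto

lemma faces_eq: "faces m k = {X \<in> sign_vectors {1..m}. card (supp X) = Suc k}"
  unfolding faces_def signvec_eq_sign_vectors ..

lemma sign_vectors_value: "X \<in> sign_vectors V \<Longrightarrow> X i \<in> {-1, 0, 1}"
  unfolding sign_vectors_def by auto

lemma sign_vectors_value_supp: "X \<in> sign_vectors V \<Longrightarrow> i \<in> supp X \<Longrightarrow> X i = 1 \<or> X i = -1"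
  unfolding sign_vectors_def supp_def by auto

lemma sign_vectors_outside: "X \<in> sign_vectors V \<Longrightarrow> i \<notin> V \<Longrightarrow> X i = 0"
  unfolding sign_vectors_def supp_def by auto

lemma sign_vectors_mono: "X \<in> sign_vectors V \<Longrightarrow> V \<subseteq> W \<Longrightarrow> X \<in> sign_vectors W"
  unfolding sign_vectors_def by auto

lemma sign_vectors_upd:
  "X \<in> sign_vectors V \<Longrightarrow> v \<in> {-1, 0, 1} \<Longrightarrow> X(w := v) \<in> sign_vectors (insert w V)"
  unfolding sign_vectors_def supp_def by auto

lemma sign_vectors_upd_0: "X \<in> sign_vectors (insert w V) \<Longrightarrow> X(w := 0) \<in> sign_vectors V"
  unfolding sign_vectors_def supp_def by auto

lemma sign_vectors_negv: "X \<in> sign_vectors V \<Longrightarrow> negv X \<in> sign_vectors V"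
  unfolding sign_vectors_def supp_def negv_def by auto

lemma finite_supp_sign_vectors: "finite V \<Longrightarrow> X \<in> sign_vectors V \<Longrightarrow> finite (supp X)"
  unfolding sign_vectors_def using finite_subset by blast

lemma card_supp_sign_vectors: "finite V \<Longrightarrow> X \<in> sign_vectors V \<Longrightarrow> card (supp X) \<le> card V"
  unfolding sign_vectors_def by (simp add: card_mono)

text \<open>A sign vector is determined by its restriction to \<open>V\<close>, an element of \<open>V \<rightarrow>\<^sub>E {-1,0,1}\<close>.\<close>
lemma finite_sign_vectors:
  assumes "finite V" shows "finite (sign_vectors V)"
proof -
  have "inj_on (\<lambda>X. restrict X V) (sign_vectors V)"
  proof (rule inj_onI)
    fix X Y assume "X \<in> sign_vectors V" "Y \<in> sign_vectors V" "restrict X V = restrict Y V"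
    then show "X = Y"
      by (metis restrict_apply' sign_vectors_outside ext)
  qed
  moreover have "(\<lambda>X. restrict X V) ` sign_vectors V \<subseteq> V \<rightarrow>\<^sub>E {-1, 0, 1}"
    unfolding sign_vectors_def by auto
  moreover have "finite (V \<rightarrow>\<^sub>E {-1::int, 0, 1})"
    using assms by (simp add: finite_PiE)
  ultimately show ?thesis
    by (meson finite_imageD finite_subset)
qed

lemma supp_upd_0 [simp]: "supp (X(i := 0)) = supp X - {i}"
  by (auto simp: supp_def)

lemma supp_negv [simp]: "supp (negv X) = supp X"
  by (auto simp: supp_def negv_def)

lemma negv_negv [simp]: "negv (negv X) = X"
  by (simp add: negv_def)

lemma negv_upd_0: "(negv X)(i := 0) = negv (X(i := 0))"
  by (auto simp: negv_def)

lemma finite_supp_upd: "finite (supp X) \<Longrightarrow> finite (supp (X(w := v)))"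
  by (rule finite_subset[of _ "insert w (supp X)"]) (auto simp: supp_def)

lemma card_supp_upd:
  "finite (supp X) \<Longrightarrow> X w = 0 \<Longrightarrow> v \<noteq> 0 \<Longrightarrow> card (supp (X(w := v))) = Suc (card (supp X))"
proof -
  assume "finite (supp X)" "X w = 0" "v \<noteq> 0"
  then have "supp (X(w := v)) = insert w (supp X)" "w \<notin> supp X" by (auto simp: supp_def)
  then show ?thesis using \<open>finite (supp X)\<close> by simp
qed

lemma bit_add_self [simp]: "(x::bit) + x = 0"
  by (cases x) (simp_all add: add_bit_eq_xor)

lemma bit_add_cancel_left [simp]: "(x::bit) + (x + y) = y"
  by (simp add: add.assoc[symmetric])

lemma bit_add_eq_iff: "(x::bit) + y = z \<longleftrightarrow> x = y + z"
  by (cases x; cases y; cases z) (simp_all add: add_bit_eq_xor)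

lemma sum_indicator_bit:
  "finite S \<Longrightarrow> (\<Sum>i\<in>S. if P i then 1 else 0) = (of_nat (card {i\<in>S. P i}) :: bit)"
proof -
  assume "finite S"
  then have "(\<Sum>i\<in>S. if P i then 1 else 0) = (\<Sum>i\<in>S \<inter> {i. P i}. (1::bit))"
    by (simp add: sum.If_cases)
  also have "S \<inter> {i. P i} = {i\<in>S. P i}" by auto
  finally show ?thesis by simp
qed

lemma card_eq_0_or_2:
  assumes "finite P"
    and no_three: "\<And>a b c. a \<in> P \<Longrightarrow> b \<in> P \<Longrightarrow> c \<in> P \<Longrightarrow> a \<noteq> b \<Longrightarrow> b \<noteq> c \<Longrightarrow> a \<noteq> c \<Longrightarrow> False"
    and partner: "\<And>a. a \<in> P \<Longrightarrow> \<exists>b\<in>P. b \<noteq> a"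
  shows "card P = 0 \<or> card P = 2"
proof (cases "P = {}")
  case False
  then obtain a b where "a \<in> P" "b \<in> P" "b \<noteq> a" using partner by blast
  then have "P = {a, b}" using no_three by blast
  then show ?thesis using \<open>b \<noteq> a\<close> by simp
qed simp

lemma sum_indicator_bit_eq_0:
  assumes "finite S"
    and "\<And>a b c. a \<in> S \<Longrightarrow> b \<in> S \<Longrightarrow> c \<in> S \<Longrightarrow> P a \<Longrightarrow> P b \<Longrightarrow> P c \<Longrightarrow>
          a \<noteq> b \<Longrightarrow> b \<noteq> c \<Longrightarrow> a \<noteq> c \<Longrightarrow> False"
    and "\<And>a. a \<in> S \<Longrightarrow> P a \<Longrightarrow> \<exists>b\<in>S. b \<noteq> a \<and> P b"
  shows "(\<Sum>i\<in>S. if P i then 1 else 0) = (0::bit)"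
proof -
  have "card {i\<in>S. P i} = 0 \<or> card {i\<in>S. P i} = 2"
  proof (rule card_eq_0_or_2)
    fix a b c assume "a \<in> {i\<in>S. P i}" "b \<in> {i\<in>S. P i}" "c \<in> {i\<in>S. P i}"
      "a \<noteq> b" "b \<noteq> c" "a \<noteq> c"
    then show False using assms(2) by blast
  next
    fix a assume "a \<in> {i\<in>S. P i}"
    then show "\<exists>b\<in>{i\<in>S. P i}. b \<noteq> a" using assms(3) by blast
  qed (use assms(1) in simp)
  then show ?thesis using sum_indicator_bit[OF assms(1)] by auto
qed

subsection \<open>Coboundaries\<close>

lemma coboundary_altdef: "coboundary c X = (\<Sum>i\<in>supp X. c (X(i := 0)))"
proof -
  have "restr X (supp X - {i}) = X(i := 0)" for i
    by (auto simp: restr_def supp_def)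
  then have "facets X = (\<lambda>i. X(i := 0)) ` supp X"
    unfolding facets_def by auto
  moreover have "inj_on (\<lambda>i. X(i := 0)) (supp X)"
  proof (rule inj_onI)
    fix i j assume "i \<in> supp X" "X(i := 0) = X(j := 0)"
    then have "(X(i := 0)) i = (X(j := 0)) i" by simp
    then show "i = j" using \<open>i \<in> supp X\<close> by (auto simp: supp_def split: if_splits)
  qed
  ultimately show ?thesis
    unfolding coboundary_def by (simp add: sum.reindex)
qed

lemma coboundary_remove:
  "finite (supp X) \<Longrightarrow> w \<in> supp X \<Longrightarrow>
    coboundary c X = c (X(w := 0)) + (\<Sum>i\<in>supp X - {w}. c (X(i := 0)))"
  unfolding coboundary_altdef by (simp add: sum.remove)

lemma coboundary_add: "coboundary (\<lambda>X. f X + g X) X = coboundary f X + coboundary g X"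
  unfolding coboundary_altdef by (rule sum.distrib)

lemma sum_offdiagonal_symmetric_bit:
  assumes "finite S" "\<And>i j. f i j = f j i"
  shows "(\<Sum>i\<in>S. \<Sum>j\<in>S - {i}. f i j) = (0::bit)"
  using assms(1)
proof (induction S rule: finite_induct)
  case (insert a S)
  have "(\<Sum>i\<in>S. \<Sum>j\<in>insert a S - {i}. f i j) = (\<Sum>i\<in>S. f i a + (\<Sum>j\<in>S - {i}. f i j))"
    using insert by (intro sum.cong) (auto simp: insert_Diff_if)
  also have "\<dots> = (\<Sum>i\<in>S. f i a) + (\<Sum>i\<in>S. \<Sum>j\<in>S - {i}. f i j)"
    by (rule sum.distrib)
  also have "\<dots> = (\<Sum>i\<in>S. f a i)"
    using insert.IH assms(2) by simp
  finally show ?case using insert by (simp add: insert_Diff_if)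
qed simp

lemma coboundary_coboundary:
  assumes "finite (supp X)" shows "coboundary (coboundary c) X = 0"
  unfolding coboundary_altdef supp_upd_0
proof (rule sum_offdiagonal_symmetric_bit[OF assms])
  show "c (X(i := 0, j := 0)) = c (X(j := 0, i := 0))" for i j
    by (cases "i = j") (auto simp: fun_upd_twist)
qed

lemma equivariant_coboundary: "equivariant c \<Longrightarrow> equivariant (coboundary c)"
  unfolding equivariant_def coboundary_altdef by (simp add: negv_upd_0)

lemma coboundary_comp_negv: "coboundary (\<lambda>X. c (negv X)) X = coboundary c (negv X)"
  unfolding coboundary_altdef by (simp add: negv_upd_0)

lemma sign_vectors_empty: "sign_vectors {} = {\<lambda>_. 0}"
  unfolding sign_vectors_def supp_def by auto

lemma sum_sign_vectors_supp_split:
  assumes "finite V" "a \<in> A"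
  shows "(\<Sum>X\<in>{X\<in>sign_vectors V. supp X = A}. f X)
       = (\<Sum>X\<in>{X\<in>sign_vectors V. supp X = A \<and> X a = 1}. f X)
       + (\<Sum>X\<in>{X\<in>sign_vectors V. supp X = A \<and> X a = -1}. f X)"
proof -
  let ?S = "\<lambda>P. {X\<in>sign_vectors V. supp X = A \<and> P X}"
  have "?S (\<lambda>_. True) = ?S (\<lambda>X. X a = 1) \<union> ?S (\<lambda>X. X a = -1)"
    using assms(2) sign_vectors_value_supp by fastforce
  moreover have "finite (?S P)" for P
    using finite_sign_vectors[OF assms(1)] by simp
  ultimately show ?thesis
    by (simp add: sum.union_disjoint[symmetric] disjoint_iff)
qed

lemma sum_equivariant_supp_eq_0:
  assumes "equivariant f" "finite V" "a \<in> A"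
  shows "(\<Sum>X\<in>{X\<in>sign_vectors V. supp X = A}. f X) = 0"
proof -
  have "(\<Sum>X\<in>{X\<in>sign_vectors V. supp X = A \<and> X a = -1}. f X)
      = (\<Sum>X\<in>{X\<in>sign_vectors V. supp X = A \<and> X a = 1}. f (negv X))"
    by (rule sum.reindex_bij_witness[of _ negv negv])
      (auto simp: sign_vectors_negv, auto simp: negv_def)
  then show ?thesis
    using assms sum_sign_vectors_supp_split[OF assms(2,3), of f] by (simp add: equivariant_def)
qed

lemma sum_sign_vectors_upd:
  assumes "w \<notin> W" "v = 1 \<or> v = -1"
  shows "(\<Sum>U\<in>{U\<in>sign_vectors W. supp U = W}. h (U(w := v)))
       = (\<Sum>X\<in>{X\<in>sign_vectors (insert w W). supp X = insert w W \<and> X w = v}. h X)"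
proof (rule sum.reindex_bij_witness[of _ "\<lambda>X. X(w := 0)" "\<lambda>U. U(w := v)"])
  fix U assume "U \<in> {U\<in>sign_vectors W. supp U = W}"
  moreover have "U w = 0" if "supp U = W" using assms(1) that by (auto simp: supp_def)
  ultimately show "(U(w := v))(w := 0) = U"
    and "U(w := v) \<in> {X\<in>sign_vectors (insert w W). supp X = insert w W \<and> X w = v}"
    using assms sign_vectors_upd[of U W v w] by (auto simp: supp_def)
next
  fix X assume "X \<in> {X\<in>sign_vectors (insert w W). supp X = insert w W \<and> X w = v}"
  then show "(X(w := 0))(w := v) = X" and "X(w := 0) \<in> {U\<in>sign_vectors W. supp U = W}"
    using assms(1) sign_vectors_upd_0 by auto
qed simp

lemma sum_sign_vectors_insert:
  assumes "finite W" "w \<notin> W"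
  shows "(\<Sum>X\<in>{X\<in>sign_vectors (insert w W). supp X = insert w W}. f X)
       = (\<Sum>U\<in>{U\<in>sign_vectors W. supp U = W}. f (U(w := 1)) + f (U(w := -1)))"
  using assms sum_sign_vectors_supp_split[of "insert w W" w "insert w W" f]
  by (simp add: sum.distrib sum_sign_vectors_upd)

subsection \<open>Cones and the cohomology of the cross-polytope\<close>

text \<open>\<open>cone w v\<close> is a chain homotopy for the vertex \<open>v e\<^sub>w\<close>: by \<open>cone_homotopy\<close>,
  \<open>F + \<delta> (cone w 1 F)\<close> agrees with \<open>\<delta> F\<close> on faces avoiding \<open>\<plusminus>e\<^sub>w\<close> and vanishes on faces
  containing \<open>e\<^sub>w\<close>.\<close>
definition cone :: "nat \<Rightarrow> int \<Rightarrow> cochain \<Rightarrow> cochain" where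
  "cone w v F X = (if X w = 0 then F (X(w := v)) else 0)"

definition star_extend :: "nat \<Rightarrow> int \<Rightarrow> cochain \<Rightarrow> cochain" where
  "star_extend w v h X = (if X w = v then h (X(w := 0)) else 0)"

lemma coboundary_cone_off_star:
  assumes "finite (supp X)" "X w = 0" "v \<noteq> 0"
  shows "coboundary (cone w v F) X = F X + coboundary F (X(w := v))"
proof -
  have w: "w \<notin> supp X" using assms(2) by (simp add: supp_def)
  have supp: "supp (X(w := v)) = insert w (supp X)" using assms(3) by (auto simp: supp_def)
  have "(X(w := v))(w := 0) = X" using assms(2) by auto
  moreover have "(X(w := v))(i := 0) = (X(i := 0))(w := v)" if "i \<in> supp X" for i
    using w that by (auto simp: fun_upd_twist)
  ultimately have "coboundary F (X(w := v)) = F X + (\<Sum>i\<in>supp X. F ((X(i := 0))(w := v)))"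
    using assms(1) w supp coboundary_remove[of "X(w := v)" w F] by simp
  also have "(\<Sum>i\<in>supp X. F ((X(i := 0))(w := v))) = coboundary (cone w v F) X"
    unfolding coboundary_altdef cone_def using w by (intro sum.cong) (auto simp: supp_def)
  finally have "coboundary F (X(w := v)) = F X + coboundary (cone w v F) X" .
  then show ?thesis by (simp only: bit_add_cancel_left)
qed

lemma coboundary_cone_in_star:
  assumes "finite (supp X)" "X w \<noteq> 0"
  shows "coboundary (cone w v F) X = F (X(w := v))"
proof -
  have "(\<Sum>i\<in>supp X - {w}. cone w v F (X(i := 0))) = 0"
    using assms(2) by (intro sum.neutral) (auto simp: cone_def)
  then show ?thesis
    using coboundary_remove[OF assms(1), of w] assms(2) by (simp add: cone_def supp_def)
qed

lemma coboundary_star_extend: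
  assumes "finite (supp X)" "v \<noteq> 0"
  shows "coboundary (star_extend w v h) X = (if X w = v then coboundary h (X(w := 0)) else 0)"
proof (cases "X w = v")
  case True
  then have w: "w \<in> supp X" using assms(2) by (simp add: supp_def)
  have "(\<Sum>i\<in>supp X - {w}. star_extend w v h (X(i := 0))) = coboundary h (X(w := 0))"
    unfolding coboundary_altdef star_extend_def using True
    by (intro sum.cong) (auto simp: fun_upd_twist)
  then show ?thesis
    using coboundary_remove[OF assms(1) w, of "star_extend w v h"] True assms(2)
    by (simp add: star_extend_def)
next
  case False
  then have "coboundary (star_extend w v h) X = 0"
    unfolding coboundary_altdef star_extend_def using assms(2) by (intro sum.neutral) auto
  then show ?thesis using False by simp
qed

lemma cone_homotopy:
  assumes "finite (supp X)" "X w \<in> {-1, 0, 1}"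
  shows "F X + coboundary (cone w 1 F) X =
    (if X w = 0 then coboundary F (X(w := 1)) else if X w = 1 then 0 else F X + F (X(w := 1)))"
proof (cases "X w = 0")
  case True
  then have "coboundary (cone w 1 F) X = F X + coboundary F (X(w := 1))"
    by (intro coboundary_cone_off_star[OF assms(1)]) simp_all
  then show ?thesis using True by (simp only: bit_add_cancel_left simp_thms if_True)
next
  case False
  then have "coboundary (cone w 1 F) X = F (X(w := 1))"
    by (rule coboundary_cone_in_star[OF assms(1)])
  then show ?thesis using False assms(2) by (cases "X w = 1") (simp_all add: fun_upd_idem)
qed

lemma cone_correction_off_star:
  assumes "finite V" "X \<in> sign_vectors (insert w V)" "card (supp X) = s" "X w \<noteq> -1"
    and cocycle: "\<And>Y. Y \<in> sign_vectors (insert w V) \<Longrightarrow> card (supp Y) = Suc s \<Longrightarrow> coboundary F Y = 0"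
  shows "F X + coboundary (cone w 1 F) X = 0"
proof -
  have fin: "finite (supp X)" using assms(1,2) finite_supp_sign_vectors by blast
  have "X w = 0 \<Longrightarrow> coboundary F (X(w := 1)) = 0"
    using assms(2,3) fin cocycle sign_vectors_upd[OF assms(2), of 1 w] card_supp_upd[of X w 1] by simp
  moreover have "X w = 0 \<or> X w = 1" using assms(4) sign_vectors_value[OF assms(2), of w] by auto
  ultimately show ?thesis
    unfolding cone_homotopy[OF fin sign_vectors_value[OF assms(2)]] by auto
qed

lemma coboundary_star_extend_eq:
  assumes "finite V" "X \<in> sign_vectors (insert w V)" "card (supp X) = s"
    and off: "X w \<noteq> -1 \<Longrightarrow> F X = 0"
    and link: "\<And>U. U \<in> sign_vectors V \<Longrightarrow> Suc (card (supp U)) = s \<Longrightarrow> cone w (-1) F U = coboundary g U"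
  shows "F X = coboundary (star_extend w (-1) g) X"
proof -
  have fin: "finite (supp X)" using assms(1,2) finite_supp_sign_vectors by blast
  show ?thesis
  proof (cases "X w = -1")
    case True
    then have "w \<in> supp X" by (simp add: supp_def)
    then have "Suc (card (supp (X(w := 0)))) = s"
      using card_Suc_Diff1[OF fin] assms(3) by simp
    then show ?thesis
      using True link[of "X(w := 0)"] sign_vectors_upd_0[OF assms(2)] coboundary_star_extend[OF fin]
      by (simp add: cone_def fun_upd_idem)
  qed (use off coboundary_star_extend[OF fin] in auto)
qed

lemma sum_link_cone_correction:
  assumes "finite W" "w \<notin> W"
  shows "(\<Sum>U\<in>{U\<in>sign_vectors W. supp U = W}. cone w (-1) (\<lambda>X. F X + coboundary (cone w 1 F) X) U)
       = (\<Sum>X\<in>{X\<in>sign_vectors (insert w W). supp X = insert w W}. F X)"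
proof -
  have "cone w (-1) (\<lambda>X. F X + coboundary (cone w 1 F) X) U = F (U(w := 1)) + F (U(w := -1))"
    if "U \<in> {U\<in>sign_vectors W. supp U = W}" for U
  proof -
    have "U w = 0" using that assms(2) by (auto simp: supp_def)
    have "finite (supp (U(w := -1)))"
      using that assms(1) by (intro finite_supp_upd) simp
    then have "F (U(w := -1)) + coboundary (cone w 1 F) (U(w := -1)) = F (U(w := -1)) + F (U(w := 1))"
      using cone_homotopy[of "U(w := -1)" w F] by simp
    then show ?thesis
      unfolding cone_def using \<open>U w = 0\<close> by (simp only: simp_thms if_True add.commute)
  qed
  then have "(\<Sum>U\<in>{U\<in>sign_vectors W. supp U = W}. cone w (-1) (\<lambda>X. F X + coboundary (cone w 1 F) X) U)
      = (\<Sum>U\<in>{U\<in>sign_vectors W. supp U = W}. F (U(w := 1)) + F (U(w := -1)))"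
    by (intro sum.cong refl)
  then show ?thesis
    using sum_sign_vectors_insert[OF assms, of F] by simp
qed

lemma coboundary_cone_link:
  assumes "finite V" "w \<notin> V" "v = 1 \<or> v = -1" "Y \<in> sign_vectors V" "card (supp Y) = Suc s"
    and "F Y = 0"
    and "\<And>Z. Z \<in> sign_vectors (insert w V) \<Longrightarrow> card (supp Z) = Suc (Suc s) \<Longrightarrow> coboundary F Z = 0"
  shows "coboundary (cone w v F) Y = 0"
proof -
  have Yw: "Y w = 0" using assms(2,4) sign_vectors_outside by blast
  have finY: "finite (supp Y)" using assms(1,4) finite_supp_sign_vectors by blast
  have "v \<noteq> 0" using assms(3) by auto
  have "Y(w := v) \<in> sign_vectors (insert w V)" using sign_vectors_upd[OF assms(4)] assms(3) by auto
  moreover have "card (supp (Y(w := v))) = Suc (Suc s)"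
    using card_supp_upd[OF finY Yw \<open>v \<noteq> 0\<close>] unfolding assms(5) .
  ultimately have "coboundary F (Y(w := v)) = 0" by (rule assms(7))
  then show ?thesis using coboundary_cone_off_star[OF finY Yw \<open>v \<noteq> 0\<close>] assms(6) by simp
qed

lemma sum_cone_full_faces:
  assumes "w \<notin> W" "v = 1 \<or> v = -1"
  shows "(\<Sum>U\<in>{U\<in>sign_vectors W. supp U = W}. cone w v F U)
       = (\<Sum>X\<in>{X\<in>sign_vectors (insert w W). supp X = insert w W \<and> X w = v}. F X)"
proof -
  have "cone w v F U = F (U(w := v))" if "U \<in> {U\<in>sign_vectors W. supp U = W}" for U
    using that assms(1) by (auto simp: cone_def supp_def)
  then have "(\<Sum>U\<in>{U\<in>sign_vectors W. supp U = W}. cone w v F U)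
      = (\<Sum>U\<in>{U\<in>sign_vectors W. supp U = W}. F (U(w := v)))"
    by (intro sum.cong refl)
  then show ?thesis
    using sum_sign_vectors_upd[OF assms, of F] by simp
qed

lemma crosspolytope_cocycle_is_coboundary:
  assumes "finite W"
    and "\<And>Y. Y \<in> sign_vectors W \<Longrightarrow> card (supp Y) = Suc s \<Longrightarrow> coboundary F Y = 0"
    and "s = card W \<Longrightarrow> (\<Sum>X\<in>{X\<in>sign_vectors W. supp X = W}. F X) = 0"
  shows "\<exists>c. \<forall>X\<in>sign_vectors W. card (supp X) = s \<longrightarrow> F X = coboundary c X"
  using assms
proof (induction W arbitrary: s F rule: finite_induct)
  case empty
  have "{X\<in>sign_vectors {}. supp X = {}} = {\<lambda>_. 0}"
    by (auto simp: sign_vectors_empty supp_def)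
  then show ?case
    using empty.prems(2) by (auto simp: sign_vectors_empty coboundary_altdef supp_def)
next
  case (insert w W)
  let ?V = "insert w W"
  define F' where "F' X = F X + coboundary (cone w 1 F) X" for X
  have F'_off: "F' X = 0" if "X \<in> sign_vectors ?V" "card (supp X) = s" "X w \<noteq> -1" for X
    unfolding F'_def using cone_correction_off_star[OF insert.hyps(1) that insert.prems(1)] .
  have "\<exists>g. \<forall>U\<in>sign_vectors W. Suc (card (supp U)) = s \<longrightarrow> cone w (-1) F' U = coboundary g U"
  proof (cases s)
    case (Suc s')
    have F'_cocycle: "coboundary F' Y = 0" if "Y \<in> sign_vectors ?V" "card (supp Y) = Suc (Suc s')" for Y
      using insert.prems(1)[OF that[unfolded Suc[symmetric]]]
        coboundary_coboundary[OF finite_supp_sign_vectors[OF _ that(1)]] insert.hyps(1)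
      unfolding F'_def coboundary_add by simp
    have "\<exists>g. \<forall>U\<in>sign_vectors W. card (supp U) = s' \<longrightarrow> cone w (-1) F' U = coboundary g U"
    proof (rule insert.IH)
      fix Y assume Y: "Y \<in> sign_vectors W" "card (supp Y) = Suc s'"
      have "Y w = 0" using Y(1) insert.hyps(2) sign_vectors_outside by blast
      then have "F' Y = 0" using F'_off[OF sign_vectors_mono[OF Y(1) subset_insertI]] Y(2) Suc by simp
      show "coboundary (cone w (-1) F') Y = 0"
        by (rule coboundary_cone_link[OF insert.hyps _ Y \<open>F' Y = 0\<close> F'_cocycle]) simp
    next
      assume "s' = card W"
      then show "(\<Sum>U\<in>{U\<in>sign_vectors W. supp U = W}. cone w (-1) F' U) = 0"
        using insert.prems(2) insert.hyps Suc sum_link_cone_correction[OF insert.hyps, of F]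
        unfolding F'_def by simp
    qed
    then show ?thesis using Suc by simp
  qed simp
  then obtain g where g: "\<And>U. U \<in> sign_vectors W \<Longrightarrow> Suc (card (supp U)) = s \<Longrightarrow>
      cone w (-1) F' U = coboundary g U"
    by blast
  have "F X = coboundary (\<lambda>X. cone w 1 F X + star_extend w (-1) g X) X"
    if "X \<in> sign_vectors ?V" "card (supp X) = s" for X
  proof -
    have "F' X = coboundary (star_extend w (-1) g) X"
      by (rule coboundary_star_extend_eq[OF insert.hyps(1) that F'_off[OF that] g])
    then show ?thesis unfolding F'_def coboundary_add bit_add_eq_iff .
  qed
  then show ?case by blast
qed

lemma equivariant_cone_0: "equivariant c \<Longrightarrow> equivariant (cone v 0 c)"
  unfolding equivariant_def cone_def by (simp add: negv_upd_0) (simp add: negv_def)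

lemma coboundary_cone_0_off_star: "X v = 0 \<Longrightarrow> coboundary (cone v 0 c) X = coboundary c X"
  unfolding coboundary_altdef cone_def by (intro sum.cong refl) (simp add: fun_upd_idem)

definition sym_extend :: "nat \<Rightarrow> cochain \<Rightarrow> cochain" where
  "sym_extend v g X = star_extend v 1 g X + star_extend v (-1) (\<lambda>U. g (negv U)) X"

lemma equivariant_sym_extend: "equivariant (sym_extend v g)"
  unfolding equivariant_def sym_extend_def star_extend_def
  by (simp add: negv_upd_0 add.commute) (simp add: negv_def)

lemma coboundary_sym_extend:
  assumes "finite (supp X)"
  shows "coboundary (sym_extend v g) X =
    (if X v = 1 then coboundary g (X(v := 0))
     else if X v = -1 then coboundary g (negv (X(v := 0))) else 0)"
  unfolding sym_extend_def coboundary_add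
  by (simp add: coboundary_star_extend[OF assms] coboundary_comp_negv)

lemma coboundary_sym_extend_eq:
  assumes "finite V" "X \<in> sign_vectors (insert v V)" "v \<notin> V" "card (supp X) = Suc n"
    and "equivariant E"
    and off: "X v = 0 \<Longrightarrow> E X = 0"
    and link: "\<And>U. U \<in> sign_vectors V \<Longrightarrow> card (supp U) = n \<Longrightarrow> cone v 1 E U = coboundary g U"
  shows "E X = coboundary (sym_extend v g) X"
proof -
  have fin: "finite (supp X)" using assms(1,2) finite_supp_sign_vectors by blast
  have link_face: "X(v := 0) \<in> sign_vectors V" "card (supp (X(v := 0))) = n" if "X v \<noteq> 0"
    using that assms(2,4) fin sign_vectors_upd_0 by (auto simp: supp_def[of X])
  consider "X v = 0" | "X v = 1" | "X v = -1" using sign_vectors_value[OF assms(2), of v] by auto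
  then show ?thesis
  proof cases
    case 2
    then show ?thesis
      using link[OF link_face] coboundary_sym_extend[OF fin] by (simp add: cone_def fun_upd_idem)
  next
    case 3
    have "(negv X) v = 1" using 3 by (simp add: negv_def)
    then have "cone v 1 E (negv (X(v := 0))) = E (negv X)"
      by (simp add: cone_def fun_upd_idem flip: negv_upd_0)
    then show ?thesis
      using 3 assms(5) link[OF sign_vectors_negv[OF link_face(1)]] link_face(2)
        coboundary_sym_extend[OF fin]
      by (simp add: equivariant_def)
  qed (use off coboundary_sym_extend[OF fin] in simp)
qed

lemma sum_coboundary_cone_0_eq_0:
  assumes "finite V" "v \<notin> V" "V \<noteq> {}" "equivariant c"
  shows "(\<Sum>X\<in>{X\<in>sign_vectors (insert v V). supp X = insert v V \<and> X v = 1}.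
      coboundary (cone v 0 c) X) = 0"
proof -
  have "(\<Sum>X\<in>{X\<in>sign_vectors (insert v V). supp X = insert v V \<and> X v = 1}. coboundary (cone v 0 c) X)
      = (\<Sum>X\<in>{X\<in>sign_vectors (insert v V). supp X = insert v V \<and> X v = 1}. c (X(v := 0)))"
    using assms(1) by (intro sum.cong refl coboundary_cone_in_star) simp_all
  also have "\<dots> = (\<Sum>U\<in>{U\<in>sign_vectors V. supp U = V}. c (U(v := 0)))"
    using sum_sign_vectors_upd[OF assms(2), of 1 "\<lambda>X. c (X(v := 0))"] by simp
  also have "\<dots> = (\<Sum>U\<in>{U\<in>sign_vectors V. supp U = V}. c U)"
    using assms(2) by (intro sum.cong refl) (auto simp: supp_def fun_upd_idem)
  also have "\<dots> = 0"
    using assms(3,4,1) sum_equivariant_supp_eq_0 by blast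
  finally show ?thesis .
qed

lemma equivariant_cocycle_is_coboundary:
  assumes "finite V" "0 < n" "equivariant E"
    and "\<And>Y. Y \<in> sign_vectors V \<Longrightarrow> card (supp Y) = Suc (Suc n) \<Longrightarrow> coboundary E Y = 0"
    and "\<And>A a. A \<subseteq> V \<Longrightarrow> card A = Suc n \<Longrightarrow> a \<in> A \<Longrightarrow>
          (\<Sum>X\<in>{X\<in>sign_vectors V. supp X = A \<and> X a = 1}. E X) = 0"
  shows "\<exists>c. equivariant c \<and> (\<forall>X\<in>sign_vectors V. card (supp X) = Suc n \<longrightarrow> E X = coboundary c X)"
  using assms(1,4,5)
proof (induction V rule: finite_induct)
  case empty
  show ?case
    by (intro exI[of _ "\<lambda>_. 0"]) (auto simp: equivariant_def sign_vectors_empty supp_def)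
next
  case (insert v V)
  let ?V = "insert v V"
  have fin: "finite (supp X)" if "X \<in> sign_vectors ?V" for X
    using finite_supp_sign_vectors[OF _ that] insert.hyps(1) by simp
  have "\<exists>c. equivariant c \<and> (\<forall>X\<in>sign_vectors V. card (supp X) = Suc n \<longrightarrow> E X = coboundary c X)"
  proof (rule insert.IH)
    fix A a assume A: "A \<subseteq> V" "card A = Suc n" "a \<in> A"
    then have "{X\<in>sign_vectors V. supp X = A \<and> X a = 1} = {X\<in>sign_vectors ?V. supp X = A \<and> X a = 1}"
      by (auto simp: sign_vectors_def)
    then show "(\<Sum>X\<in>{X\<in>sign_vectors V. supp X = A \<and> X a = 1}. E X) = 0"
      using insert.prems(2)[of A a] A by auto
  qed (use insert.prems(1) sign_vectors_mono in blast)
  then obtain c' where c': "equivariant c'"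
    "\<And>X. X \<in> sign_vectors V \<Longrightarrow> card (supp X) = Suc n \<Longrightarrow> E X = coboundary c' X"
    by blast
  text \<open>Subtracting the coboundary of \<open>c'\<close>, restricted to the faces avoiding \<open>\<plusminus>e\<^sub>v\<close>, leaves
    a cocycle supported on the faces through \<open>\<plusminus>e\<^sub>v\<close>; its link is a cocycle on the
    cross-polytope over \<open>V\<close>.\<close>
  define E' where "E' X = E X + coboundary (cone v 0 c') X" for X
  have E'_eqv: "equivariant E'"
    using assms(3) equivariant_coboundary[OF equivariant_cone_0[OF c'(1)]]
    unfolding equivariant_def E'_def by simp
  have E'_off: "E' X = 0" if "X \<in> sign_vectors ?V" "card (supp X) = Suc n" "X v = 0" for X
  proof -
    have "X \<in> sign_vectors V" using that(1,3) by (auto simp: sign_vectors_def supp_def)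
    then show ?thesis
      using that c'(2) coboundary_cone_0_off_star[of X v c'] by (simp add: E'_def)
  qed
  have "\<exists>g. \<forall>U\<in>sign_vectors V. card (supp U) = n \<longrightarrow> cone v 1 E' U = coboundary g U"
  proof (rule crosspolytope_cocycle_is_coboundary[OF insert.hyps(1)])
    fix Y assume Y: "Y \<in> sign_vectors V" "card (supp Y) = Suc n"
    have Yv: "Y v = 0" using Y(1) insert.hyps(2) sign_vectors_outside by blast
    have finY: "finite (supp Y)" using Y(1) insert.hyps(1) finite_supp_sign_vectors by blast
    have "coboundary E (Y(v := 1)) = 0"
      using Y Yv finY insert.prems(1) sign_vectors_upd[OF Y(1), of 1 v] card_supp_upd[of Y v 1] by simp
    moreover have "coboundary (coboundary (cone v 0 c')) (Y(v := 1)) = 0"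
      using finY by (intro coboundary_coboundary finite_supp_upd)
    ultimately have "coboundary E' (Y(v := 1)) = 0"
      unfolding E'_def coboundary_add by simp
    moreover have "E' Y = 0"
      using E'_off[OF sign_vectors_mono[OF Y(1) subset_insertI] Y(2) Yv] .
    ultimately show "coboundary (cone v 1 E') Y = 0"
      using coboundary_cone_off_star[OF finY Yv, of 1 E'] by simp
  next
    assume "n = card V"
    then have "V \<noteq> {}" using assms(2) by auto
    have "(\<Sum>U\<in>{U\<in>sign_vectors V. supp U = V}. cone v 1 E' U)
        = (\<Sum>U\<in>{U\<in>sign_vectors V. supp U = V}. E' (U(v := 1)))"
      using insert.hyps(2) by (intro sum.cong refl) (auto simp: cone_def supp_def)
    also have "\<dots> = (\<Sum>X\<in>{X\<in>sign_vectors ?V. supp X = ?V \<and> X v = 1}. E' X)"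
      by (rule sum_sign_vectors_upd[OF insert.hyps(2)]) simp
    also have "\<dots> = (\<Sum>X\<in>{X\<in>sign_vectors ?V. supp X = ?V \<and> X v = 1}. E X + coboundary (cone v 0 c') X)"
      unfolding E'_def ..
    also have "\<dots> = 0"
      using insert.prems(2)[of ?V v] \<open>n = card V\<close> insert.hyps
        sum_coboundary_cone_0_eq_0[OF insert.hyps(1,2) \<open>V \<noteq> {}\<close> c'(1)]
      by (simp add: sum.distrib)
    finally show "(\<Sum>U\<in>{U\<in>sign_vectors V. supp U = V}. cone v 1 E' U) = 0" .
  qed
  then obtain g where g: "\<And>U. U \<in> sign_vectors V \<Longrightarrow> card (supp U) = n \<Longrightarrow> cone v 1 E' U = coboundary g U"
    by blast
  show ?case
  proof (intro exI[of _ "\<lambda>X. cone v 0 c' X + sym_extend v g X"] conjI ballI impI)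
    show "equivariant (\<lambda>X. cone v 0 c' X + sym_extend v g X)"
      using equivariant_cone_0[OF c'(1)] equivariant_sym_extend[of v g]
      unfolding equivariant_def by simp
    fix X assume "X \<in> sign_vectors ?V" "card (supp X) = Suc n"
    then have "E' X = coboundary (sym_extend v g) X"
      using coboundary_sym_extend_eq[OF insert.hyps(1) _ insert.hyps(2) _ E'_eqv] E'_off g by blast
    then show "E X = coboundary (\<lambda>X. cone v 0 c' X + sym_extend v g X) X"
      unfolding coboundary_add E'_def bit_add_eq_iff .
  qed
qed

definition pos_in :: "nat set \<Rightarrow> nat \<Rightarrow> nat" where
  "pos_in A i = card {a\<in>A. a < i}"

definition alternating :: "nat set \<Rightarrow> (nat \<Rightarrow> int) \<Rightarrow> bool" where
  "alternating A X \<longleftrightarrow> (\<exists>\<sigma>. (\<sigma> = 1 \<or> \<sigma> = -1) \<and> (\<forall>i\<in>A. X i = \<sigma> * (-1) ^ pos_in A i))"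

lemma alternating_cong: "(\<And>i. i \<in> A \<Longrightarrow> X i = Y i) \<Longrightarrow> alternating A X = alternating A Y"
  unfolding alternating_def by auto

lemma neg_one_power_cases: "(-1::int) ^ k = 1 \<or> (-1::int) ^ k = -1"
  by (cases "even k") auto

lemma pos_in_less: "i < q \<Longrightarrow> pos_in (insert q B) i = pos_in B i"
proof -
  assume "i < q"
  then have "{a\<in>insert q B. a < i} = {a\<in>B. a < i}" by auto
  then show ?thesis by (simp add: pos_in_def)
qed

lemma pos_in_greatest: "\<forall>b\<in>B. b < q \<Longrightarrow> pos_in (insert q B) q = card B"
proof -
  assume "\<forall>b\<in>B. b < q"
  then have "{a\<in>insert q B. a < q} = B" by auto
  then show ?thesis by (simp add: pos_in_def)
qed

lemma pos_in_remove:
  assumes "finite S" "p \<in> S"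
  shows "pos_in S i = (if p < i then Suc (pos_in (S - {p}) i) else pos_in (S - {p}) i)"
proof -
  have eq: "{a\<in>S - {p}. a < i} = {a\<in>S. a < i} - {p}" by auto
  show ?thesis
  proof (cases "p < i")
    case True
    then have "p \<in> {a\<in>S. a < i}" using assms(2) by simp
    moreover have "finite {a\<in>S. a < i}" using assms(1) by simp
    ultimately show ?thesis
      unfolding pos_in_def eq using True by (metis card_Suc_Diff1)
  next
    case False
    then have "{a\<in>S. a < i} - {p} = {a\<in>S. a < i}" by auto
    then show ?thesis unfolding pos_in_def eq using False by simp
  qed
qed

lemma alternating_insert_greater:
  assumes "finite B" "p \<in> B" "\<forall>b\<in>B. b \<le> p" "p < q" "X q = 1 \<or> X q = -1"
  shows "alternating (insert q B) X \<longleftrightarrow> alternating B X \<and> X p \<noteq> X q"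
proof -
  obtain j where j: "card B = Suc j" using assms(1,2) by (cases "card B") auto
  have pos_B: "pos_in (insert q B) i = pos_in B i" if "i \<in> B" for i
    using that assms(3,4) by (intro pos_in_less) force
  have "\<forall>b\<in>B. b < q" using assms(3,4) by force
  then have pos_q: "pos_in (insert q B) q = Suc j"
    using pos_in_greatest j by simp
  have pos_p: "pos_in B p = j"
  proof -
    have "pos_in (insert p (B - {p})) p = card (B - {p})"
      using assms(3) by (intro pos_in_greatest) force
    then show ?thesis using assms(2) j by (simp add: insert_absorb)
  qed
  have step: "X q = \<sigma> * (-1) ^ Suc j \<longleftrightarrow> \<sigma> * (-1) ^ j \<noteq> X q" if "\<sigma> = 1 \<or> \<sigma> = -1" for \<sigma>
    using that assms(5) neg_one_power_cases[of j] by auto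
  show ?thesis
  proof
    assume "alternating (insert q B) X"
    then obtain \<sigma> where \<sigma>: "\<sigma> = 1 \<or> \<sigma> = -1" "\<forall>i\<in>insert q B. X i = \<sigma> * (-1) ^ pos_in (insert q B) i"
      unfolding alternating_def by blast
    then have "alternating B X" unfolding alternating_def using pos_B by auto
    moreover have "X p \<noteq> X q"
      using \<sigma> step[OF \<sigma>(1)] pos_B[OF assms(2)] pos_q pos_p assms(2) by auto
    ultimately show "alternating B X \<and> X p \<noteq> X q" ..
  next
    assume "alternating B X \<and> X p \<noteq> X q"
    then obtain \<sigma> where \<sigma>: "\<sigma> = 1 \<or> \<sigma> = -1" "\<forall>i\<in>B. X i = \<sigma> * (-1) ^ pos_in B i" "X p \<noteq> X q"
      unfolding alternating_def by blast
    then have "X q = \<sigma> * (-1) ^ pos_in (insert q B) q"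
      using step[OF \<sigma>(1)] pos_p pos_q assms(2) by auto
    then show "alternating (insert q B) X"
      unfolding alternating_def using \<sigma> pos_B by (intro exI[of _ \<sigma>]) auto
  qed
qed

lemma sorted_list_of_set_insert_greater:
  assumes "finite B" "\<forall>b\<in>B. b < q"
  shows "sorted_list_of_set (insert q B) = sorted_list_of_set B @ [q]"
proof -
  have "q \<notin> B" using assms(2) by auto
  then show ?thesis
    using assms by (intro sorted_list_of_set.sorted_key_list_of_set_unique[THEN iffD1])
      (auto simp: sorted_wrt_append)
qed

lemma w1_restr_pair:
  assumes "p \<noteq> q" "X p = 1 \<or> X p = -1" "X q = 1 \<or> X q = -1"
  shows "w1 (restr X {p, q}) = (if X p \<noteq> X q then 1 else 0)"
proof -
  have "supp (restr X {p, q}) = {p, q}"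
    using assms by (auto simp: supp_def restr_def)
  then have "card (supp (restr X {p, q})) = 2"
    using assms(1) by simp
  moreover have "(\<exists>i j. restr X {p, q} i = 1 \<and> restr X {p, q} j = -1) \<longleftrightarrow> X p \<noteq> X q"
    using assms by (auto simp: restr_def)
  ultimately show ?thesis
    unfolding w1_def by simp
qed

lemma w1_pow_eq_alternating:
  assumes "\<forall>i. X i \<in> {-1, 0, 1}" "finite (supp X)" "card (supp X) = Suc k"
  shows "w1_pow k X = (if alternating (supp X) X then 1 else 0)"
  using assms
proof (induction k arbitrary: X)
  case 0
  then obtain a where A: "supp X = {a}" by (auto simp: card_Suc_eq)
  then have "X a = 1 \<or> X a = -1" using 0 by (auto simp: supp_def)
  moreover have "pos_in {a} a = 0" by (simp add: pos_in_def)
  ultimately have "alternating (supp X) X"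
    unfolding alternating_def A by (intro exI[of _ "X a"]) auto
  then show ?case by simp
next
  case (Suc k)
  let ?A = "supp X"
  define q where "q = Max ?A"
  define B where "B = ?A - {q}"
  define p where "p = Max B"
  have "q \<in> ?A" using Suc.prems(3) Suc.prems(2) unfolding q_def by (intro Max_in) auto
  then have A: "?A = insert q B" by (auto simp: B_def)
  have card_B: "card B = Suc k" and fin_B: "finite B"
    using Suc.prems(2,3) \<open>q \<in> ?A\<close> by (simp_all add: B_def)
  then have "B \<noteq> {}" by auto
  have B_less: "\<forall>b\<in>B. b < q"
    using Suc.prems(2) unfolding B_def q_def by (auto intro: Max_ge order.not_eq_order_implies_strict)
  have p: "p \<in> B" "\<forall>b\<in>B. b \<le> p" "p < q"
    using fin_B \<open>B \<noteq> {}\<close> B_less unfolding p_def by auto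
  have val: "X i = 1 \<or> X i = -1" if "i \<in> ?A" for i
    using Suc.prems(1) that by (auto simp: supp_def)
  have "sorted_list_of_set B = sorted_list_of_set (B - {p}) @ [p]"
    using sorted_list_of_set_insert_greater[of "B - {p}" p] fin_B p(1,2) by (simp add: insert_absorb less_le)
  moreover have "length (sorted_list_of_set (B - {p})) = k" using card_B fin_B p(1) by simp
  ultimately have "take (Suc k) (sorted_list_of_set ?A) = sorted_list_of_set B"
    and "drop k (sorted_list_of_set ?A) = [p, q]"
    unfolding A sorted_list_of_set_insert_greater[OF fin_B B_less] by simp_all
  then have "w1_pow (Suc k) X = w1_pow k (restr X B) * w1 (restr X {p, q})"
    using fin_B by (simp add: cup_def Let_def)
  moreover have "w1_pow k (restr X B) = (if alternating B X then 1 else 0)"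
  proof -
    have "supp (restr X B) = B" using A by (auto simp: supp_def restr_def)
    moreover have "\<forall>i. restr X B i \<in> {-1, 0, 1}" using Suc.prems(1) by (simp add: restr_def)
    moreover have "alternating B (restr X B) = alternating B X"
      by (rule alternating_cong) (simp add: restr_def)
    ultimately show ?thesis
      using Suc.IH[of "restr X B"] fin_B card_B by simp
  qed
  moreover have "w1 (restr X {p, q}) = (if X p \<noteq> X q then 1 else 0)"
    using p A val by (intro w1_restr_pair) auto
  ultimately show ?case
    using alternating_insert_greater[OF fin_B p, of X] val[OF \<open>q \<in> ?A\<close>] A by simp
qed

lemma w1_negv: "w1 (negv X) = w1 X"
  unfolding w1_def negv_def supp_def by auto

lemma restr_negv: "restr (negv X) B = negv (restr X B)"
  unfolding restr_def negv_def by auto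

lemma equivariant_w1_pow: "equivariant (w1_pow k)"
  by (induction k) (simp_all add: equivariant_def cup_def Let_def restr_negv w1_negv)

definition sign_change_at :: "nat set \<Rightarrow> (nat \<Rightarrow> int) \<Rightarrow> nat \<Rightarrow> bool" where
  "sign_change_at S z p \<longleftrightarrow>
     (\<exists>\<sigma>. (\<sigma> = 1 \<or> \<sigma> = -1) \<and> (\<forall>i\<in>S - {p}. z i = (if p < i then -\<sigma> else \<sigma>)))"

lemma alternating_remove_iff:
  assumes "finite S" "p \<in> S"
  shows "alternating (S - {p}) X \<longleftrightarrow> sign_change_at S (\<lambda>i. X i * (-1) ^ pos_in S i) p"
proof -
  have "X i = \<sigma> * (-1) ^ pos_in (S - {p}) i \<longleftrightarrow> X i * (-1) ^ pos_in S i = (if p < i then -\<sigma> else \<sigma>)"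
    for i \<sigma>
    using neg_one_power_cases[of "pos_in (S - {p}) i"]
    unfolding pos_in_remove[OF assms, of i] by auto
  then show ?thesis
    unfolding alternating_def sign_change_at_def by simp
qed

lemma sign_change_at_no_three:
  assumes "x < y" "y < w" "x \<in> S" "y \<in> S" "w \<in> S"
    and "sign_change_at S z x" "sign_change_at S z y" "sign_change_at S z w"
  shows False
proof -
  obtain \<sigma>1 \<sigma>2 \<sigma>3 where \<sigma>2: "\<sigma>2 = 1 \<or> \<sigma>2 = -1"
    and x: "\<forall>i\<in>S - {x}. z i = (if x < i then -\<sigma>1 else \<sigma>1)"
    and y: "\<forall>i\<in>S - {y}. z i = (if y < i then -\<sigma>2 else \<sigma>2)"
    and w: "\<forall>i\<in>S - {w}. z i = (if w < i then -\<sigma>3 else \<sigma>3)"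
    using assms(6-8) unfolding sign_change_at_def by blast
  have "z y = -\<sigma>1" "z w = -\<sigma>1" using bspec[OF x, of y] bspec[OF x, of w] assms(1-5) by auto
  moreover have "z x = \<sigma>2" "z w = -\<sigma>2" using bspec[OF y, of x] bspec[OF y, of w] assms(1-5) by auto
  moreover have "z x = \<sigma>3" "z y = \<sigma>3" using bspec[OF w, of x] bspec[OF w, of y] assms(1-5) by auto
  ultimately show False using \<sigma>2 by auto
qed

lemma distinct_three_ordered:
  fixes a b c :: nat
  assumes "a \<noteq> b" "b \<noteq> c" "a \<noteq> c"
    and "\<And>x y w. x < y \<Longrightarrow> y < w \<Longrightarrow> x \<in> {a, b, c} \<Longrightarrow> y \<in> {a, b, c} \<Longrightarrow> w \<in> {a, b, c} \<Longrightarrow> False"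
  shows False
  using assms by (metis insertCI linorder_neqE_nat)

lemma sign_change_at_partner_up:
  assumes "finite S" "2 \<le> card S" "p \<in> S" "\<sigma> = 1 \<or> \<sigma> = -1"
    and step: "\<forall>i\<in>S - {p}. z i = (if p < i then -\<sigma> else \<sigma>)" and "z p = \<sigma>"
  shows "\<exists>p'\<in>S. p' \<noteq> p \<and> sign_change_at S z p'"
proof (cases "\<exists>i\<in>S. p < i")
  case True
  define p' where "p' = Min {i\<in>S. p < i}"
  have "p' \<in> {i\<in>S. p < i}"
    unfolding p'_def using True assms(1) by (intro Min_in) auto
  then have p': "p' \<in> S" "p < p'" "\<And>i. i \<in> S \<Longrightarrow> p < i \<Longrightarrow> p' \<le> i"
    using assms(1) unfolding p'_def by auto
  have "z i = (if p' < i then -\<sigma> else \<sigma>)" if i: "i \<in> S - {p'}" for i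
  proof (cases "p' < i")
    case False
    then have "\<not> p < i" using p'(3) i by force
    then show ?thesis using step i False assms(6) by (cases "i = p") auto
  qed (use step i p'(2) in auto)
  then show ?thesis
    using p' assms(4) unfolding sign_change_at_def by (intro bexI[of _ p']) auto
next
  case False
  define p' where "p' = Min S"
  have p': "p' \<in> S" "\<And>i. i \<in> S \<Longrightarrow> p' \<le> i"
    using assms(1,3) unfolding p'_def by (auto intro: Min_in)
  have "p' \<noteq> p"
  proof
    assume "p' = p"
    then have "S = {p}" using False p' by force
    then show False using assms(2) by simp
  qed
  have "z i = (if p' < i then - (-\<sigma>) else -\<sigma>)" if i: "i \<in> S - {p'}" for i
  proof -
    have "p' \<noteq> i" "p' \<le> i" "i \<le> p" using i p'(2) False by force+
    then show ?thesis using step i assms(6) by (cases "i = p") auto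
  qed
  then show ?thesis
    using p' \<open>p' \<noteq> p\<close> assms(4) unfolding sign_change_at_def by (intro bexI[of _ p']) auto
qed

lemma sign_change_at_partner_down:
  assumes "finite S" "2 \<le> card S" "p \<in> S" "\<sigma> = 1 \<or> \<sigma> = -1"
    and step: "\<forall>i\<in>S - {p}. z i = (if p < i then -\<sigma> else \<sigma>)" and "z p = -\<sigma>"
  shows "\<exists>p'\<in>S. p' \<noteq> p \<and> sign_change_at S z p'"
proof (cases "\<exists>i\<in>S. i < p")
  case True
  define p' where "p' = Max {i\<in>S. i < p}"
  have "p' \<in> {i\<in>S. i < p}"
    unfolding p'_def using True assms(1) by (intro Max_in) auto
  then have p': "p' \<in> S" "p' < p" "\<And>i. i \<in> S \<Longrightarrow> i < p \<Longrightarrow> i \<le> p'"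
    using assms(1) unfolding p'_def by auto
  have "z i = (if p' < i then -\<sigma> else \<sigma>)" if i: "i \<in> S - {p'}" for i
  proof (cases "p' < i")
    case True
    then have "\<not> i < p" using p'(3) i by force
    then show ?thesis using step i True assms(6) p'(2) by (cases "i = p") auto
  qed (use step i p'(2) in auto)
  then show ?thesis
    using p' assms(4) unfolding sign_change_at_def by (intro bexI[of _ p']) auto
next
  case False
  define p' where "p' = Max S"
  have p': "p' \<in> S" "\<And>i. i \<in> S \<Longrightarrow> i \<le> p'"
    using assms(1,3) unfolding p'_def by (auto intro: Max_in)
  have "p' \<noteq> p"
  proof
    assume "p' = p"
    then have "S = {p}" using False p' by force
    then show False using assms(2) by simp
  qed
  have "z i = (if p' < i then - (-\<sigma>) else -\<sigma>)" if i: "i \<in> S - {p'}" for i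
  proof -
    have "p' \<noteq> i" "i \<le> p'" "p \<le> i" using i p'(2) False by force+
    then show ?thesis using step i assms(6) by (cases "i = p") auto
  qed
  then show ?thesis
    using p' \<open>p' \<noteq> p\<close> assms(4) unfolding sign_change_at_def by (intro bexI[of _ p']) auto
qed

lemma card_sign_change_at:
  assumes "finite S" "2 \<le> card S" "\<forall>i\<in>S. z i = 1 \<or> z i = -1"
  shows "(\<Sum>p\<in>S. if sign_change_at S z p then 1 else 0) = (0::bit)"
proof (rule sum_indicator_bit_eq_0[OF assms(1)])
  fix a b c assume "a \<in> S" "b \<in> S" "c \<in> S" "sign_change_at S z a" "sign_change_at S z b"
    "sign_change_at S z c" "a \<noteq> b" "b \<noteq> c" "a \<noteq> c"
  then show False
    using distinct_three_ordered[of a b c] sign_change_at_no_three[of _ _ _ S z] by blast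
next
  fix p assume p: "p \<in> S" "sign_change_at S z p"
  then obtain \<sigma> where \<sigma>: "\<sigma> = 1 \<or> \<sigma> = -1" "\<forall>i\<in>S - {p}. z i = (if p < i then -\<sigma> else \<sigma>)"
    unfolding sign_change_at_def by blast
  have "z p = \<sigma> \<or> z p = -\<sigma>" using assms(3) p(1) \<sigma>(1) by auto
  then show "\<exists>p'\<in>S. p' \<noteq> p \<and> sign_change_at S z p'"
    using sign_change_at_partner_up[OF assms(1,2) p(1) \<sigma>]
      sign_change_at_partner_down[OF assms(1,2) p(1) \<sigma>] by blast
qed

lemma coboundary_w1_pow:
  assumes "\<forall>i. X i \<in> {-1, 0, 1}" "finite (supp X)" "card (supp X) = Suc (Suc n)"
  shows "coboundary (w1_pow n) X = 0"
proof -
  let ?S = "supp X"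
  define z where "z i = X i * (-1) ^ pos_in ?S i" for i
  have "coboundary (w1_pow n) X = (\<Sum>p\<in>?S. if sign_change_at ?S z p then 1 else 0)"
    unfolding coboundary_altdef
  proof (rule sum.cong[OF refl])
    fix p assume p: "p \<in> ?S"
    have "w1_pow n (X(p := 0)) = (if alternating (?S - {p}) (X(p := 0)) then 1 else 0)"
      using w1_pow_eq_alternating[of "X(p := 0)" n] assms p by simp
    also have "alternating (?S - {p}) (X(p := 0)) = alternating (?S - {p}) X"
      by (rule alternating_cong) simp
    also have "\<dots> = sign_change_at ?S z p"
      unfolding z_def by (rule alternating_remove_iff[OF assms(2) p])
    finally show "w1_pow n (X(p := 0)) = (if sign_change_at ?S z p then 1 else 0)" .
  qed
  also have "\<dots> = 0"
  proof (rule card_sign_change_at[OF assms(2)])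
    show "\<forall>i\<in>?S. z i = 1 \<or> z i = -1"
    proof
      fix i assume "i \<in> ?S"
      then have "X i = 1 \<or> X i = -1" using assms(1) by (auto simp: supp_def)
      then show "z i = 1 \<or> z i = -1"
        unfolding z_def using neg_one_power_cases[of "pos_in ?S i"] by auto
    qed
  qed (use assms(3) in simp)
  finally show ?thesis .
qed

lemma sum_w1_pow_orbit:
  assumes "finite V" "A \<subseteq> V" "card A = Suc n" "a \<in> A"
  shows "(\<Sum>X\<in>{X\<in>sign_vectors V. supp X = A \<and> X a = 1}. w1_pow n X) = 1"
proof -
  let ?T = "{X\<in>sign_vectors V. supp X = A \<and> X a = 1}"
  define X0 where "X0 i = (if i \<in> A then (-1::int) ^ pos_in A a * (-1) ^ pos_in A i else 0)" for i :: nat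
  have fin_A: "finite A" using assms(1,2) finite_subset by blast
  have "(\<Sum>X\<in>?T. w1_pow n X) = (\<Sum>X\<in>?T. if alternating A X then 1 else 0)"
    using fin_A assms(3) w1_pow_eq_alternating sign_vectors_value by (intro sum.cong) auto
  also have "{X\<in>?T. alternating A X} = {X0}"
  proof (intro equalityI subsetI)
    fix X assume X: "X \<in> {X\<in>?T. alternating A X}"
    then obtain \<sigma> where \<sigma>: "\<sigma> = 1 \<or> \<sigma> = -1" "\<forall>i\<in>A. X i = \<sigma> * (-1) ^ pos_in A i"
      unfolding alternating_def by blast
    then have "\<sigma> = (-1) ^ pos_in A a"
      using X assms(4) neg_one_power_cases[of "pos_in A a"] by force
    then show "X \<in> {X0}"
      using \<sigma>(2) X by (auto simp: X0_def supp_def fun_eq_iff)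
  next
    fix X assume "X \<in> {X0}"
    have "X0 i = 1 \<or> X0 i = -1" if "i \<in> A" for i
      using that neg_one_power_cases[of "pos_in A a + pos_in A i"] by (simp add: X0_def power_add)
    then have "X0 \<in> sign_vectors V" "supp X0 = A"
      using assms(2) unfolding sign_vectors_def supp_def by (auto simp: X0_def[of i for i])
    moreover have "alternating A X0"
      unfolding alternating_def X0_def
      using neg_one_power_cases[of "pos_in A a"] by (intro exI[of _ "(-1) ^ pos_in A a"]) auto
    ultimately show "X \<in> {X\<in>?T. alternating A X}"
      using \<open>X \<in> {X0}\<close> assms(4) neg_one_power_cases[of "pos_in A a"] by (auto simp: X0_def)
  qed
  ultimately show ?thesis
    using sum_indicator_bit[of ?T] finite_sign_vectors[OF assms(1)] by simp
qed

lemma C_M_eq: "finite C \<Longrightarrow> C_M C X = (if X \<in> C then 1 else 0)"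
  unfolding C_M_def hat_def by (simp add: sum.delta')

locale uniform_oriented_matroid =
  fixes m r :: nat and C :: "(nat \<Rightarrow> int) set"
  assumes rank_le: "r \<le> m"
    and cocircuits: "oriented_matroid_cocircuits m C"
    and uniform: "uniform_rank m r C"
begin

lemmas cocircuits_subset = cocircuits[unfolded oriented_matroid_cocircuits_def, THEN conjunct1]
  and cocircuits_negv =
    cocircuits[unfolded oriented_matroid_cocircuits_def, THEN conjunct2, THEN conjunct2, THEN conjunct1]
  and cocircuits_supp_subset = cocircuits[unfolded oriented_matroid_cocircuits_def,
    THEN conjunct2, THEN conjunct2, THEN conjunct2, THEN conjunct1]
  and cocircuits_elimination = cocircuits[unfolded oriented_matroid_cocircuits_def,
    THEN conjunct2, THEN conjunct2, THEN conjunct2, THEN conjunct2]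

lemma cocircuit_sign_vector: "X \<in> C \<Longrightarrow> X \<in> sign_vectors {1..m}"
  using cocircuits_subset signvec_eq_sign_vectors by blast

lemma finite_cocircuits: "finite C"
  by (rule finite_subset[OF _ finite_sign_vectors[of "{1..m}"]]) (auto dest: cocircuit_sign_vector)

lemma cocircuit_negv: "X \<in> C \<Longrightarrow> negv X \<in> C"
  using cocircuits_negv by blast

lemma cocircuit_scale: "X \<in> C \<Longrightarrow> s = 1 \<or> s = -1 \<Longrightarrow> (\<lambda>i. s * X i) \<in> C"
  using cocircuit_negv[of X] by (elim disjE) (simp_all add: negv_def)

lemma cocircuit_supp_eq: "X \<in> C \<Longrightarrow> Y \<in> C \<Longrightarrow> supp X = supp Y \<Longrightarrow> X = Y \<or> X = negv Y"
  using cocircuits_supp_subset by blast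

lemma cocircuit_unique:
  assumes "X \<in> C" "Y \<in> C" "supp X = supp Y" "a \<in> supp X" "X a = Y a"
  shows "X = Y"
proof -
  have "X \<noteq> negv Y"
  proof
    assume "X = negv Y"
    then have "X a = - Y a" by (simp add: negv_def)
    then show False using assms(4,5) by (simp add: supp_def)
  qed
  then show ?thesis using cocircuit_supp_eq[OF assms(1-3)] by blast
qed

lemma card_supp_cocircuit: "X \<in> C \<Longrightarrow> card (supp X) = Suc (m - r)"
proof -
  assume "X \<in> C"
  then have "supp X \<in> supp ` C" by (rule imageI)
  then show ?thesis using uniform unfolding uniform_rank_def by simp
qed

lemma ex_cocircuit:
  assumes "A \<subseteq> {1..m}" "card A = Suc (m - r)" "a \<in> A" "\<sigma> = 1 \<or> \<sigma> = -1"
  shows "\<exists>Y\<in>C. supp Y = A \<and> Y a = \<sigma>"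
proof -
  have "A \<in> supp ` C" using assms(1,2) uniform unfolding uniform_rank_def by simp
  then obtain Y where Y: "Y \<in> C" "supp Y = A" by blast
  then have "Y a = 1 \<or> Y a = -1"
    using assms(3) sign_vectors_value_supp[OF cocircuit_sign_vector] by blast
  then have "(\<lambda>i. Y a * \<sigma> * Y i) \<in> C" "(\<lambda>i. Y a * \<sigma> * Y i) a = \<sigma>"
    using cocircuit_scale[OF Y(1), of "Y a * \<sigma>"] assms(4) by auto
  moreover have "supp (\<lambda>i. Y a * \<sigma> * Y i) = A"
    using Y(2) \<open>Y a = 1 \<or> Y a = -1\<close> assms(4) by (auto simp: supp_def)
  ultimately show ?thesis by blast
qed

text \<open>Cocircuit elimination, with the support of the eliminant forced by uniformity.\<close>
lemma cocircuit_elimination: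
  assumes "U \<in> C" "V \<in> C" "U \<noteq> negv V" "U e = 1" "V e = -1"
    and "supp U \<union> supp V \<subseteq> S" "finite S" "card S = Suc (Suc (m - r))" "e \<in> S"
  shows "\<exists>Z\<in>C. supp Z = S - {e} \<and> (\<forall>k. Z k \<noteq> 0 \<longrightarrow> Z k = U k \<or> Z k = V k)"
proof -
  have "e \<in> posp U \<inter> negp V" using assms(4,5) by (simp add: posp_def negp_def)
  then obtain Z where Z: "Z \<in> C" "posp Z \<subseteq> posp U \<union> posp V" "negp Z \<subseteq> negp U \<union> negp V"
    "e \<notin> supp Z"
    using cocircuits_elimination assms(1-3) by blast
  have conform: "Z k = U k \<or> Z k = V k" if "Z k \<noteq> 0" for k
    using that Z(2,3) sign_vectors_value[OF cocircuit_sign_vector[OF Z(1)], of k]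
    by (auto simp: posp_def negp_def)
  have "supp Z \<subseteq> S - {e}"
  proof
    fix k assume "k \<in> supp Z"
    then have "k \<in> supp U \<union> supp V" using conform[of k] by (auto simp: supp_def)
    then show "k \<in> S - {e}" using assms(6) Z(4) \<open>k \<in> supp Z\<close> by blast
  qed
  moreover have "card (supp Z) = card (S - {e})"
    using card_supp_cocircuit[OF Z(1)] assms(7-9) by simp
  ultimately have "supp Z = S - {e}" using assms(7) by (simp add: card_subset_eq)
  then show ?thesis using Z(1) conform by blast
qed


lemma no_three_cocircuit_facets:
  assumes X: "X \<in> sign_vectors {1..m}" "card (supp X) = Suc (Suc (m - r))"
    and "a \<in> supp X" "b \<in> supp X" "c \<in> supp X" "a \<noteq> b" "b \<noteq> c" "a \<noteq> c"
    and "X(a := 0) \<in> C" "X(b := 0) \<in> C" "X(c := 0) \<in> C"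
  shows False
proof -
  have val: "X k = 1 \<or> X k = -1" if "k \<in> supp X" for k
    using sign_vectors_value_supp[OF X(1) that] .
  define x where "x = X c"
  have x: "x = 1 \<or> x = -1" "x * x = 1" using val[OF assms(5)] unfolding x_def by auto
  define U where "U = (\<lambda>i. x * (X(a := 0)) i)"
  define V where "V = (\<lambda>i. - x * (X(b := 0)) i)"
  have "U \<in> C" "V \<in> C"
    unfolding U_def V_def using cocircuit_scale[OF assms(9) x(1)] cocircuit_scale[OF assms(10), of "-x"] x(1)
    by auto
  moreover have "U \<noteq> negv V"
  proof
    assume "U = negv V"
    then have "U a = - V a" by (simp add: negv_def)
    then show False using assms(3,6) x(1) val[OF assms(3)] by (auto simp: U_def V_def)
  qed
  moreover have "U c = 1" "V c = -1" using assms(7,8) x unfolding U_def V_def x_def by auto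
  moreover have "supp U \<union> supp V \<subseteq> supp X" by (auto simp: U_def V_def supp_def)
  moreover have "finite (supp X)" using finite_supp_sign_vectors[OF _ X(1)] by simp
  ultimately obtain Z where Z: "Z \<in> C" "supp Z = supp X - {c}" "\<forall>k. Z k \<noteq> 0 \<longrightarrow> Z k = U k \<or> Z k = V k"
    using cocircuit_elimination[of U V c "supp X"] X(2) assms(5) by blast
  have "a \<in> supp Z" "b \<in> supp Z" using Z(2) assms(3-8) by auto
  then have "Z b = x * X b" "Z a = - x * X a"
    using Z(3) assms(6) unfolding supp_def by (auto simp: U_def V_def)
  moreover have "Z = X(c := 0) \<or> Z = negv (X(c := 0))"
    using cocircuit_supp_eq[OF Z(1) assms(11)] Z(2) by simp
  ultimately show False
    using assms(3-8) x val[OF assms(3)] val[OF assms(4)] by (auto simp: negv_def)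
qed

text \<open>One step of a descent: a cocircuit on a facet of \<open>X\<close> that disagrees with \<open>X\<close> at \<open>e\<close> is
  traded, by elimination against \<open>X(a := 0)\<close> at \<open>e\<close>, for a cocircuit on the facet opposite \<open>e\<close>
  with strictly fewer disagreements.\<close>
lemma cocircuit_facet_descent:
  assumes X: "X \<in> sign_vectors {1..m}" "card (supp X) = Suc (Suc (m - r))"
    and a: "a \<in> supp X" "X(a := 0) \<in> C"
    and W: "W \<in> C" "supp W = supp X - {i}" "W a = X a"
    and e: "e \<in> supp W" "W e \<noteq> X e"
  shows "\<exists>W'\<in>C. supp W' = supp X - {e} \<and> W' a = X a \<and>
    {k\<in>supp W'. W' k \<noteq> X k} \<subseteq> {k\<in>supp W. W k \<noteq> X k} - {e}"
proof -
  have val: "X k = 1 \<or> X k = -1" if "k \<in> supp X" for k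
    using sign_vectors_value_supp[OF X(1) that] .
  have "e \<in> supp X" "e \<noteq> i" "e \<noteq> a" using e W(2,3) by auto
  have "W e = 1 \<or> W e = -1"
    using sign_vectors_value_supp[OF cocircuit_sign_vector[OF W(1)] e(1)] .
  define x where "x = X e"
  have x: "x = 1 \<or> x = -1" "x * x = 1" using val[OF \<open>e \<in> supp X\<close>] unfolding x_def by auto
  define U where "U = (\<lambda>k. x * (X(a := 0)) k)"
  define V where "V = (\<lambda>k. x * W k)"
  have "U \<in> C" "V \<in> C"
    unfolding U_def V_def using cocircuit_scale[OF a(2) x(1)] cocircuit_scale[OF W(1) x(1)] by auto
  moreover have "U \<noteq> negv V"
  proof
    assume "U = negv V"
    then have "U a = - V a" by (simp add: negv_def)
    then show False using W(3) x(1) val[OF a(1)] by (auto simp: U_def V_def)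
  qed
  moreover have "U e = 1" "V e = -1"
    using \<open>e \<noteq> a\<close> e(2) \<open>W e = 1 \<or> W e = -1\<close> val[OF \<open>e \<in> supp X\<close>] unfolding U_def V_def x_def by auto
  moreover have "supp U \<union> supp V \<subseteq> supp X" using W(2) by (auto simp: U_def V_def supp_def)
  moreover have "finite (supp X)" using finite_supp_sign_vectors[OF _ X(1)] by simp
  ultimately obtain Z where Z: "Z \<in> C" "supp Z = supp X - {e}" "\<And>k. Z k \<noteq> 0 \<Longrightarrow> Z k = U k \<or> Z k = V k"
    using cocircuit_elimination[of U V e "supp X"] X(2) \<open>e \<in> supp X\<close> by blast
  define W' where "W' = (\<lambda>k. x * Z k)"
  have "W' \<in> C" unfolding W'_def by (rule cocircuit_scale[OF Z(1) x(1)])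
  moreover have "supp W' = supp Z" using x(1) by (auto simp: W'_def supp_def)
  then have supp_W': "supp W' = supp X - {e}" using Z(2) by simp
  moreover have agree: "W' k = X k" if "k \<in> supp W'" "k = a \<or> k = i \<or> W k = X k" for k
  proof -
    have Zk: "Z k \<noteq> 0" using that(1) by (simp add: W'_def supp_def)
    have "i \<notin> supp W" using W(2) by simp
    have "Z k = x * X k"
    proof (cases "k = a")
      case True
      then show ?thesis using Z(3)[OF Zk] Zk W(3) by (auto simp: U_def V_def)
    next
      case False
      then have "U k = x * X k" by (simp add: U_def)
      moreover have "V k = 0 \<or> V k = U k"
        using that(2) False \<open>i \<notin> supp W\<close> by (auto simp: V_def U_def supp_def)
      ultimately show ?thesis using Z(3)[OF Zk] Zk by auto
    qed
    then show ?thesis using x(2) by (simp add: W'_def mult.assoc[symmetric])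
  qed
  moreover have "a \<in> supp W'" using supp_W' a(1) \<open>e \<noteq> a\<close> by simp
  moreover have "{k\<in>supp W'. W' k \<noteq> X k} \<subseteq> {k\<in>supp W. W k \<noteq> X k} - {e}"
    using agree supp_W' W(2) by auto
  ultimately show ?thesis by blast
qed

lemma second_cocircuit_facet:
  assumes X: "X \<in> sign_vectors {1..m}" "card (supp X) = Suc (Suc (m - r))"
    and a: "a \<in> supp X" "X(a := 0) \<in> C"
  shows "\<exists>b\<in>supp X. b \<noteq> a \<and> X(b := 0) \<in> C"
proof -
  have "finite (supp X)" using finite_supp_sign_vectors[OF _ X(1)] by simp
  have descent: "W \<in> C \<Longrightarrow> supp W = supp X - {i} \<Longrightarrow> W a = X a \<Longrightarrow>
      card {k\<in>supp W. W k \<noteq> X k} = n \<Longrightarrow> \<exists>b\<in>supp X. b \<noteq> a \<and> X(b := 0) \<in> C" for n W i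
  proof (induction n arbitrary: W i rule: less_induct)
    case (less n)
    show ?case
    proof (cases "{k\<in>supp W. W k \<noteq> X k} = {}")
      case True
      have "W k = (X(i := 0)) k" for k
      proof (cases "k \<in> supp W")
        case True
        then show ?thesis using \<open>{k\<in>supp W. W k \<noteq> X k} = {}\<close> less.prems(2) by auto
      next
        case False
        then have "k \<notin> supp X - {i}" using less.prems(2) by simp
        then show ?thesis using False by (auto simp: supp_def)
      qed
      then have "W = X(i := 0)" ..
      then have "X(i := 0) \<in> C" using less.prems(1) by (simp only:)
      moreover have "i \<in> supp X"
      proof (rule ccontr)
        assume "i \<notin> supp X"
        then have "card (supp W) = Suc (Suc (m - r))" using less.prems(2) X(2) by simp
        then show False using card_supp_cocircuit[OF less.prems(1)] by simp
      qed
      moreover have "a \<in> supp W" using less.prems(3) a(1) by (simp add: supp_def)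
      then have "i \<noteq> a" using less.prems(2) by auto
      ultimately show ?thesis by blast
    next
      case False
      then obtain e where e: "e \<in> supp W" "W e \<noteq> X e" by blast
      obtain W' where W': "W' \<in> C" "supp W' = supp X - {e}" "W' a = X a"
        "{k\<in>supp W'. W' k \<noteq> X k} \<subseteq> {k\<in>supp W. W k \<noteq> X k} - {e}"
        using cocircuit_facet_descent[OF X a less.prems(1-3) e] by blast
      have "finite {k\<in>supp W. W k \<noteq> X k}" using less.prems(2) \<open>finite (supp X)\<close> by simp
      then have "card {k\<in>supp W'. W' k \<noteq> X k} \<le> card ({k\<in>supp W. W k \<noteq> X k} - {e})"
        using W'(4) by (intro card_mono) simp_all
      also have "\<dots> < n"
        using card_Diff1_less[OF \<open>finite {k\<in>supp W. W k \<noteq> X k}\<close>] e less.prems(4) by simp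
      finally have "card {k\<in>supp W'. W' k \<noteq> X k} < n" .
      then show ?thesis using less.IH W'(1-3) by blast
    qed
  qed
  have "card (supp X - {a}) = Suc (m - r)" using X(2) a(1) \<open>finite (supp X)\<close> by simp
  then have "supp X - {a} \<noteq> {}" by (metis card.empty nat.distinct(1))
  then obtain i where i: "i \<in> supp X" "i \<noteq> a" by blast
  have "supp X - {i} \<subseteq> {1..m}" "card (supp X - {i}) = Suc (m - r)" "a \<in> supp X - {i}"
    using X i a(1) \<open>finite (supp X)\<close> by (auto simp: sign_vectors_def)
  then obtain W where "W \<in> C" "supp W = supp X - {i}" "W a = X a"
    using ex_cocircuit sign_vectors_value_supp[OF X(1) a(1)] by blast
  then show ?thesis using descent by blast
qed

lemma coboundary_C_M:
  assumes "X \<in> sign_vectors {1..m}" "card (supp X) = Suc (Suc (m - r))"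
  shows "coboundary (C_M C) X = 0"
proof -
  have "coboundary (C_M C) X = (\<Sum>i\<in>supp X. if X(i := 0) \<in> C then 1 else 0)"
    unfolding coboundary_altdef C_M_eq[OF finite_cocircuits] ..
  also have "\<dots> = 0"
  proof (rule sum_indicator_bit_eq_0)
    show "finite (supp X)" using finite_supp_sign_vectors[OF _ assms(1)] by simp
  qed (use no_three_cocircuit_facets[OF assms] second_cocircuit_facet[OF assms] in blast)+
  finally show ?thesis .
qed

lemma sum_C_M_orbit:
  assumes "A \<subseteq> {1..m}" "card A = Suc (m - r)" "a \<in> A"
  shows "(\<Sum>X\<in>{X\<in>sign_vectors {1..m}. supp X = A \<and> X a = 1}. C_M C X) = 1"
proof -
  let ?T = "{X\<in>sign_vectors {1..m}. supp X = A \<and> X a = 1}"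
  obtain Y where Y: "Y \<in> C" "supp Y = A" "Y a = 1" using ex_cocircuit[OF assms] by blast
  have "{X\<in>?T. X \<in> C} = {Y}"
  proof (intro equalityI subsetI)
    fix X assume "X \<in> {X\<in>?T. X \<in> C}"
    then have "X = Y" using Y assms(3) cocircuit_unique[of X Y a] by simp
    then show "X \<in> {Y}" by simp
  qed (use Y cocircuit_sign_vector in auto)
  then show ?thesis
    using sum_indicator_bit[of ?T] finite_sign_vectors[of "{1..m}"]
    unfolding C_M_eq[OF finite_cocircuits] by simp
qed

lemma equivariant_C_M: "equivariant (C_M C)"
proof -
  have "negv X \<in> C \<longleftrightarrow> X \<in> C" for X
    using cocircuit_negv[of X] cocircuit_negv[of "negv X"] by auto
  then show ?thesis
    unfolding equivariant_def C_M_eq[OF finite_cocircuits] by simp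
qed

end

lemma orbit_sums_zero_vertex:
  assumes "finite V" "equivariant D" "X \<in> sign_vectors V" "card (supp X) = 1"
    and orbit: "\<And>x. x \<in> V \<Longrightarrow> (\<Sum>Y\<in>{Y\<in>sign_vectors V. supp Y = {x} \<and> Y x = 1}. D Y) = 0"
  shows "D X = 0"
proof -
  obtain x where x: "supp X = {x}" using assms(4) card_1_singletonE by blast
  then have "x \<in> V" using assms(3) by (auto simp: sign_vectors_def)
  define E where "E = (\<lambda>i. if i = x then 1 else (0::int))"
  have "Y = E" if "supp Y = {x}" "Y x = 1" for Y
  proof
    fix i
    have "i \<noteq> x \<Longrightarrow> i \<notin> supp Y" using that(1) by simp
    then show "Y i = E i" using that(2) by (auto simp: E_def supp_def)
  qed
  then have "{Y\<in>sign_vectors V. supp Y = {x} \<and> Y x = 1} = {E}"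
    using \<open>x \<in> V\<close> by (auto simp: E_def sign_vectors_def supp_def split: if_splits)
  then have "D E = 0" using orbit[OF \<open>x \<in> V\<close>] by simp
  moreover have "X = E \<or> negv X = E"
  proof (cases "X x = 1")
    case True
    then show ?thesis using \<open>\<And>Y. supp Y = {x} \<Longrightarrow> Y x = 1 \<Longrightarrow> Y = E\<close> x by blast
  next
    case False
    then have "negv X x = 1"
      using sign_vectors_value_supp[OF assms(3), of x] x by (simp add: negv_def)
    then show ?thesis using \<open>\<And>Y. supp Y = {x} \<Longrightarrow> Y x = 1 \<Longrightarrow> Y = E\<close> x by simp
  qed
  ultimately show ?thesis using assms(2) unfolding equivariant_def by (metis negv_negv)
qed

text \<open>An equivariant \<open>n\<close>-cocycle on the boundary of the cross-polytope is determined up to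
  equivariant coboundaries by its sums over the positive halves of the orbits of the
  \<open>n\<close>-faces on each \<open>(n+1)\<close>-set of coordinates, i.e. by its values on the sub-projective spaces
  \<open>\<real>P\<^sup>n\<close>.\<close>
lemma equiv_cohomologous_by_orbit_sums:
  assumes "equivariant a" "equivariant b"
    and "\<And>Y. Y \<in> sign_vectors {1..m} \<Longrightarrow> card (supp Y) = Suc (Suc n) \<Longrightarrow> coboundary a Y = 0"
    and "\<And>Y. Y \<in> sign_vectors {1..m} \<Longrightarrow> card (supp Y) = Suc (Suc n) \<Longrightarrow> coboundary b Y = 0"
    and "\<And>A x. A \<subseteq> {1..m} \<Longrightarrow> card A = Suc n \<Longrightarrow> x \<in> A \<Longrightarrow>
      (\<Sum>X\<in>{X\<in>sign_vectors {1..m}. supp X = A \<and> X x = 1}. a X)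
      = (\<Sum>X\<in>{X\<in>sign_vectors {1..m}. supp X = A \<and> X x = 1}. b X)"
  shows "equiv_cohomologous m n a b"
proof -
  define D where "D X = a X + b X" for X
  have eqv: "equivariant D" using assms(1,2) by (simp add: equivariant_def D_def)
  have cocycle: "coboundary D Y = 0"
    if "Y \<in> sign_vectors {1..m}" "card (supp Y) = Suc (Suc n)" for Y
    using assms(3,4)[OF that] unfolding D_def coboundary_add by simp
  have orbit: "(\<Sum>X\<in>{X\<in>sign_vectors {1..m}. supp X = A \<and> X x = 1}. D X) = 0"
    if "A \<subseteq> {1..m}" "card A = Suc n" "x \<in> A" for A x
    using assms(5)[OF that] unfolding D_def sum.distrib by simp
  have "\<exists>c. equivariant c \<and> (\<forall>X\<in>faces m n. D X = (if n = 0 then 0 else coboundary c X))"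
  proof (cases "n = 0")
    case True
    have vertex_orbit: "(\<Sum>Y\<in>{Y\<in>sign_vectors {1..m}. supp Y = {x} \<and> Y x = 1}. D Y) = 0"
      if "x \<in> {1..m}" for x
      using orbit[of "{x}" x] that True by simp
    have "D X = 0" if "X \<in> faces m n" for X
      using that True by (intro orbit_sums_zero_vertex[OF _ eqv _ _ vertex_orbit]) (simp_all add: faces_eq)
    then show ?thesis
      using True by (intro exI[of _ "\<lambda>_. 0"]) (simp add: equivariant_def)
  next
    case False
    then show ?thesis
      using equivariant_cocycle_is_coboundary[of "{1..m}" n D] eqv cocycle orbit
      by (auto simp: faces_eq)
  qed
  then show ?thesis
    unfolding equiv_cohomologous_def D_def by simp
qed

theorem theorem4p1:
  fixes m r :: nat and C :: "(nat \<Rightarrow> int) set"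
  assumes "r \<le> m"
    and "oriented_matroid_cocircuits m C"
    and "uniform_rank m r C"
  shows "equivariant (C_M C)
       \<and> is_cocycle m (m - r) (C_M C)
       \<and> equiv_cohomologous m (m - r) (C_M C) (w1_pow (m - r))"
proof -
  interpret uniform_oriented_matroid m r C using assms by unfold_locales
  have w1_pow_cocycle: "coboundary (w1_pow (m - r)) Y = 0"
    if "Y \<in> sign_vectors {1..m}" "card (supp Y) = Suc (Suc (m - r))" for Y
    using coboundary_w1_pow[OF _ finite_supp_sign_vectors] sign_vectors_value that by blast
  have "equiv_cohomologous m (m - r) (C_M C) (w1_pow (m - r))"
    using sum_C_M_orbit sum_w1_pow_orbit[of "{1..m}"]
    by (intro equiv_cohomologous_by_orbit_sums equivariant_C_M equivariant_w1_pow coboundary_C_M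
        w1_pow_cocycle) simp_all
  then show ?thesis
    using equivariant_C_M coboundary_C_M unfolding is_cocycle_def faces_eq by simp
qed

end
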